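(* The functor $G:\mathbf{cMet}_1\to\mathrm{ER}(\mathbf U)$, $G(X,d)=(X,d)$, $G(f)=[(x,y)\mapsto d(f(x),y)]$, is full and faithful. In particular, for complete metric spaces $(X,d_X),(Y,d_Y)$ of diameter at most 1 and every functional relation $F:(X,d_X)\to(Y,d_Y)$ in $\mathrm{ER}(\mathbf U)$ there is a unique uniformly continuous $f:X\to Y$ with $[F]=G(f)$.
   Context: $\mathbf{cMet}_1$: complete metric spaces with all distances $\le 1$ and uniformly continuous maps. For functions $\alpha,\beta:Z\to[0,1]$ write $\alpha\sqsubseteq\beta$ if for every $\varepsilon>0$ there exists $\delta>0$ such that for all $z\in Z$, $\alpha(z)\le\delta$ implies $\beta(z)\le\varepsilon$. The category $\mathrm{ER}(\mathbf U)$: objects are pairs $(X,R)$ with $X$ a set and $R:X\times X\to[0,1]$ such that $R(x,x)=0$ for all $x$, $R(x,y)\sqsubseteq R(y,x)$ as functions of $(x,y)$, and $\max(R(x,y),R(y,z))\sqsubseteq R(x,z)$ as functions of $(x,y,z)$. A functional relation $(X,R)\to(Y,S)$ is a function $F:X\times Y\to[0,1]$ with $\max(F(x,y),R(x,x'),S(y,y'))\sqsubseteq F(x',y')$ as functions of $(x,x',y,y')$, $\max(F(x,y),F(x,y'))\sqsubseteq S(y,y')$ as functions of $(x,y,y')$, and $\inf_{y\in Y}F(x,y)=0$ for all $x$. Morphisms are equivalence classes $[F]$ of functional relations, with $F\sim F'$ iff $F\sqsubseteq F'$ as functions on $X\times Y$; identity $[R]$; composite of $[F]$ and $[H]$ is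 $[(x,z)\mapsto\inf_y\max(F(x,y),H(y,z))]$. *)

theory Defs
  imports "HOL-Analysis.Analysis"
begin

definition approx_le :: "'z set \<Rightarrow> ('z \<Rightarrow> real) \<Rightarrow> ('z \<Rightarrow> real) \<Rightarrow> bool" where
  "approx_le Z \<alpha> \<beta> \<longleftrightarrow>
     (\<forall>\<epsilon>>0. \<exists>\<delta>>0. \<forall>z\<in>Z. \<alpha> z \<le> \<delta> \<longrightarrow> \<beta> z \<le> \<epsilon>)"

definition ER_obj :: "'a set \<Rightarrow> ('a \<Rightarrow> 'a \<Rightarrow> real) \<Rightarrow> bool" where
  "ER_obj X R \<longleftrightarrow>
     (\<forall>x\<in>X. \<forall>y\<in>X. 0 \<le> R x y \<and> R x y \<le> 1) \<and>
     (\<forall>x\<in>X. R x x = 0) \<and>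
     approx_le (X \<times> X) (\<lambda>(x,y). R x y) (\<lambda>(x,y). R y x) \<and>
     approx_le (X \<times> X \<times> X) (\<lambda>(x,y,z). max (R x y) (R y z)) (\<lambda>(x,y,z). R x z)"

text \<open>Functional relations (X,R) -> (Y,S). The condition inf_{y in Y} F(x,y) = 0
  (for [0,1]-valued F) is written out literally as: for every eps>0 some y in Y
  has F(x,y) < eps.\<close>
definition functional_rel ::
  "'a set \<Rightarrow> ('a \<Rightarrow> 'a \<Rightarrow> real) \<Rightarrow> 'b set \<Rightarrow> ('b \<Rightarrow> 'b \<Rightarrow> real) \<Rightarrow> ('a \<Rightarrow> 'b \<Rightarrow> real) \<Rightarrow> bool" where
  "functional_rel X R Y S F \<longleftrightarrow>
     (\<forall>x\<in>X. \<forall>y\<in>Y. 0 \<le> F x y \<and> F x y \<le> 1) \<and>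
     approx_le (X \<times> X \<times> Y \<times> Y) (\<lambda>(x,x',y,y'). max (F x y) (max (R x x') (S y y')))
                                   (\<lambda>(x,x',y,y'). F x' y') \<and>
     approx_le (X \<times> Y \<times> Y) (\<lambda>(x,y,y'). max (F x y) (F x y')) (\<lambda>(x,y,y'). S y y') \<and>
     (\<forall>x\<in>X. \<forall>\<epsilon>>0. \<exists>y\<in>Y. F x y < \<epsilon>)"

definition fr_equiv :: "'a set \<Rightarrow> 'b set \<Rightarrow> ('a \<Rightarrow> 'b \<Rightarrow> real) \<Rightarrow> ('a \<Rightarrow> 'b \<Rightarrow> real) \<Rightarrow> bool" where
  "fr_equiv X Y F F' \<longleftrightarrow> approx_le (X \<times> Y) (\<lambda>(x,y). F x y) (\<lambda>(x,y). F' x y)"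

definition G_map :: "('b \<Rightarrow> 'b \<Rightarrow> real) \<Rightarrow> ('a \<Rightarrow> 'b) \<Rightarrow> ('a \<Rightarrow> 'b \<Rightarrow> real)" where
  "G_map dY f = (\<lambda>x y. dY (f x) y)"

definition cMet1 :: "'a set \<Rightarrow> ('a \<Rightarrow> 'a \<Rightarrow> real) \<Rightarrow> bool" where
  "cMet1 X d \<longleftrightarrow> Metric_space X d \<and> Metric_space.mcomplete X d \<and>
                  (\<forall>x\<in>X. \<forall>y\<in>X. d x y \<le> 1)"

end

theory Submission
  imports Defs
begin

text \<open>For fixed x the sets \<open>{y. F x y \<le> \<delta>}\<close> are nonempty and, by the second condition on a
  functional relation, their diameters tend to 0 with \<delta>, uniformly in x. Completeness of Y
  gives a point f x on which they concentrate, and the uniform modulus makes F equivalent to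
  \<open>d\<^sub>Y (f x) y\<close>. Compatibility of F with \<open>d\<^sub>X\<close> then makes f uniformly continuous. Uniqueness
  holds because any y at which two equivalent relations are both small is close to both images.\<close>

lemma (in Metric_space) eq_if_mdist_le_epsilon:
  assumes "x \<in> M" "y \<in> M" "\<And>\<epsilon>. \<epsilon> > 0 \<Longrightarrow> d x y \<le> \<epsilon>"
  shows "x = y"
proof -
  have "d x y \<le> 0"
    by (rule field_le_epsilon) (simp add: assms(3))
  then show ?thesis
    using assms(1,2) nonneg[of x y] zero[of x y] by linarith
qed
text \<open>The point z inherits every modulus \<open>\<epsilon> \<mapsto> \<delta>\<close> of concentration of \<open>\<phi>\<close>, so moduli that are
  uniform in a parameter remain uniform for the resulting points.\<close>

lemma (in Metric_space) mcomplete_obtain_concentration_point: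
  fixes \<phi> :: "'a \<Rightarrow> real"
  assumes "mcomplete"
    and inf_zero: "\<And>\<epsilon>. \<epsilon> > 0 \<Longrightarrow> \<exists>y\<in>M. \<phi> y < \<epsilon>"
    and concentrated: "\<And>\<epsilon>. \<epsilon> > 0 \<Longrightarrow> \<exists>\<delta>>0. \<forall>y\<in>M. \<forall>y'\<in>M. \<phi> y \<le> \<delta> \<longrightarrow> \<phi> y' \<le> \<delta> \<longrightarrow> d y y' \<le> \<epsilon>"
  obtains z where "z \<in> M"
    and "\<And>\<epsilon> \<delta> y. \<delta> > 0 \<Longrightarrow> \<forall>y\<in>M. \<forall>y'\<in>M. \<phi> y \<le> \<delta> \<longrightarrow> \<phi> y' \<le> \<delta> \<longrightarrow> d y y' \<le> \<epsilon> \<Longrightarrow>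
           y \<in> M \<Longrightarrow> \<phi> y \<le> \<delta> \<Longrightarrow> d z y \<le> \<epsilon>"
proof -
  have "\<forall>n. \<exists>y\<in>M. \<phi> y < inverse (Suc n)"
    using inf_zero by simp
  then obtain s where s: "\<And>n. s n \<in> M" "\<And>n. \<phi> (s n) < inverse (Suc n)"
    by metis
  have eventually_small: "\<forall>\<^sub>F n in sequentially. \<phi> (s n) \<le> \<delta>" if "\<delta> > 0" for \<delta>
  proof -
    have "\<forall>\<^sub>F n in sequentially. inverse (real (Suc n)) < \<delta>"
      using LIMSEQ_inverse_real_of_nat \<open>\<delta> > 0\<close> by (rule order_tendstoD)
    then show ?thesis
      by eventually_elim (meson s(2) less_trans less_imp_le)
  qed
  have cauchy: "\<exists>N. \<forall>n n'. N \<le> n \<longrightarrow> N \<le> n' \<longrightarrow> d (s n) (s n') < \<epsilon>" if "\<epsilon> > 0" for \<epsilon>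
  proof -
    obtain \<delta> where "\<delta> > 0" and \<delta>: "\<forall>y\<in>M. \<forall>y'\<in>M. \<phi> y \<le> \<delta> \<longrightarrow> \<phi> y' \<le> \<delta> \<longrightarrow> d y y' \<le> \<epsilon>/2"
      using concentrated \<open>\<epsilon> > 0\<close> half_gt_zero by blast
    then obtain N where N: "\<forall>n\<ge>N. \<phi> (s n) \<le> \<delta>"
      using eventually_small[OF \<open>\<delta> > 0\<close>] by (auto simp: eventually_sequentially)
    have "d (s n) (s n') < \<epsilon>" if "N \<le> n" "N \<le> n'" for n n'
    proof -
      have "d (s n) (s n') \<le> \<epsilon>/2"
        using \<delta> N s(1) that by blast
      with \<open>\<epsilon> > 0\<close> show ?thesis by linarith
    qed
    then show ?thesis by blast
  qed
  have "MCauchy s"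
    unfolding MCauchy_def using s(1) cauchy by blast
  then obtain z where lim: "limitin mtopology s z sequentially"
    using \<open>mcomplete\<close> mcomplete_def by blast
  show thesis
  proof
    show "z \<in> M"
      using lim limitin_mspace by blast
    fix \<epsilon> \<delta> y
    assume "\<delta> > 0" and \<delta>: "\<forall>y\<in>M. \<forall>y'\<in>M. \<phi> y \<le> \<delta> \<longrightarrow> \<phi> y' \<le> \<delta> \<longrightarrow> d y y' \<le> \<epsilon>"
      and y: "y \<in> M" "\<phi> y \<le> \<delta>"
    show "d z y \<le> \<epsilon>"
    proof (rule field_le_epsilon)
      fix \<eta> :: real
      assume "\<eta> > 0"
      then have "\<forall>\<^sub>F n in sequentially. d (s n) z < \<eta>"
        using lim by (simp add: limitin_metric eventually_conj_iff)
      then have "\<forall>\<^sub>F n in sequentially. \<phi> (s n) \<le> \<delta> \<and> d (s n) z < \<eta>"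
        using eventually_small[OF \<open>\<delta> > 0\<close>] by (simp add: eventually_conj_iff)
      then obtain n where "\<phi> (s n) \<le> \<delta>" "d (s n) z < \<eta>"
        using eventually_happens' sequentially_bot by blast
      moreover have "d (s n) y \<le> \<epsilon>"
        using \<delta> s(1) y \<open>\<phi> (s n) \<le> \<delta>\<close> by blast
      moreover have "d z y \<le> d (s n) z + d (s n) y"
        using triangle'' \<open>z \<in> M\<close> s(1) y(1) by blast
      ultimately show "d z y \<le> \<epsilon> + \<eta>"
        by linarith
    qed
  qed
qed

lemma fr_equiv_iff:
  "fr_equiv X Y F F' \<longleftrightarrow> (\<forall>\<epsilon>>0. \<exists>\<delta>>0. \<forall>x\<in>X. \<forall>y\<in>Y. F x y \<le> \<delta> \<longrightarrow> F' x y \<le> \<epsilon>)"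
  unfolding fr_equiv_def approx_le_def by auto

context
  fixes X R Y S F
  assumes fr: "functional_rel X R Y S F"
begin

lemma functional_rel_compatible:
  assumes "\<epsilon> > 0"
  obtains \<delta> where "\<delta> > 0"
    and "\<And>x x' y y'. x \<in> X \<Longrightarrow> x' \<in> X \<Longrightarrow> y \<in> Y \<Longrightarrow> y' \<in> Y \<Longrightarrow>
           F x y \<le> \<delta> \<Longrightarrow> R x x' \<le> \<delta> \<Longrightarrow> S y y' \<le> \<delta> \<Longrightarrow> F x' y' \<le> \<epsilon>"
proof -
  have "\<exists>\<delta>>0. \<forall>(x, x', y, y')\<in>X \<times> X \<times> Y \<times> Y.
      max (F x y) (max (R x x') (S y y')) \<le> \<delta> \<longrightarrow> F x' y' \<le> \<epsilon>"
    using fr assms unfolding functional_rel_def approx_le_def by (simp only: case_prod_unfold)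
  then show thesis
    using that by fastforce
qed

lemma functional_rel_single_valued:
  assumes "\<epsilon> > 0"
  obtains \<delta> where "\<delta> > 0"
    and "\<And>x y y'. x \<in> X \<Longrightarrow> y \<in> Y \<Longrightarrow> y' \<in> Y \<Longrightarrow> F x y \<le> \<delta> \<Longrightarrow> F x y' \<le> \<delta> \<Longrightarrow> S y y' \<le> \<epsilon>"
proof -
  have "\<exists>\<delta>>0. \<forall>(x, y, y')\<in>X \<times> Y \<times> Y. max (F x y) (F x y') \<le> \<delta> \<longrightarrow> S y y' \<le> \<epsilon>"
    using fr assms unfolding functional_rel_def approx_le_def by (simp only: case_prod_unfold)
  then show thesis
    using that by fastforce
qed

lemma functional_rel_total: "x \<in> X \<Longrightarrow> \<epsilon> > 0 \<Longrightarrow> \<exists>y\<in>Y. F x y < \<epsilon>"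
  using fr unfolding functional_rel_def by blast

end

lemma functional_rel_represented_by_map:
  assumes Y: "Metric_space Y dY" "Metric_space.mcomplete Y dY"
    and fr: "functional_rel X dX Y dY F"
  obtains f where "f \<in> X \<rightarrow> Y" and "fr_equiv X Y F (G_map dY f)"
proof -
  interpret Y: Metric_space Y dY by (fact Y(1))
  have "\<exists>z\<in>Y. \<forall>\<epsilon> \<delta> y. \<delta> > 0 \<longrightarrow>
          (\<forall>y\<in>Y. \<forall>y'\<in>Y. F x y \<le> \<delta> \<longrightarrow> F x y' \<le> \<delta> \<longrightarrow> dY y y' \<le> \<epsilon>) \<longrightarrow>
          y \<in> Y \<longrightarrow> F x y \<le> \<delta> \<longrightarrow> dY z y \<le> \<epsilon>" if "x \<in> X" for x
  proof -
    have "\<exists>\<delta>>0. \<forall>y\<in>Y. \<forall>y'\<in>Y. F x y \<le> \<delta> \<longrightarrow> F x y' \<le> \<delta> \<longrightarrow> dY y y' \<le> \<epsilon>" if "\<epsilon> > 0" for \<epsilon>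
      using functional_rel_single_valued[OF fr \<open>\<epsilon> > 0\<close>] \<open>x \<in> X\<close> by metis
    then obtain z where "z \<in> Y" and "\<And>\<epsilon> \<delta> y. \<delta> > 0 \<Longrightarrow>
          \<forall>y\<in>Y. \<forall>y'\<in>Y. F x y \<le> \<delta> \<longrightarrow> F x y' \<le> \<delta> \<longrightarrow> dY y y' \<le> \<epsilon> \<Longrightarrow>
          y \<in> Y \<Longrightarrow> F x y \<le> \<delta> \<Longrightarrow> dY z y \<le> \<epsilon>"
      using Y.mcomplete_obtain_concentration_point[OF Y(2), of "F x"]
        functional_rel_total[OF fr \<open>x \<in> X\<close>] by blast
    then show ?thesis by blast
  qed
  then obtain f where f: "f \<in> X \<rightarrow> Y"
    and center: "\<And>x \<epsilon> \<delta> y. x \<in> X \<Longrightarrow> \<delta> > 0 \<Longrightarrow>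
          \<forall>y\<in>Y. \<forall>y'\<in>Y. F x y \<le> \<delta> \<longrightarrow> F x y' \<le> \<delta> \<longrightarrow> dY y y' \<le> \<epsilon> \<Longrightarrow>
          y \<in> Y \<Longrightarrow> F x y \<le> \<delta> \<Longrightarrow> dY (f x) y \<le> \<epsilon>"
    by (metis Pi_I)
  have "fr_equiv X Y F (G_map dY f)"
    unfolding fr_equiv_iff G_map_def
  proof (intro allI impI)
    fix \<epsilon> :: real
    assume "\<epsilon> > 0"
    \<comment> \<open>this \<delta> serves every x at once\<close>
    then obtain \<delta> where "\<delta> > 0" and "\<And>x y y'. x \<in> X \<Longrightarrow> y \<in> Y \<Longrightarrow> y' \<in> Y \<Longrightarrow>
        F x y \<le> \<delta> \<Longrightarrow> F x y' \<le> \<delta> \<Longrightarrow> dY y y' \<le> \<epsilon>"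
      using functional_rel_single_valued[OF fr] by blast
    then show "\<exists>\<delta>>0. \<forall>x\<in>X. \<forall>y\<in>Y. F x y \<le> \<delta> \<longrightarrow> dY (f x) y \<le> \<epsilon>"
      using center by blast
  qed
  with f show thesis by (rule that)
qed

lemma uniformly_continuous_map_if_represents:
  assumes X: "Metric_space X dX" and Y: "Metric_space Y dY"
    and fr: "functional_rel X dX Y dY F"
    and f: "f \<in> X \<rightarrow> Y" and rep: "fr_equiv X Y F (G_map dY f)"
  shows "uniformly_continuous_map (metric (X, dX)) (metric (Y, dY)) f"
proof -
  interpret X: Metric_space X dX by (fact X)
  interpret Y: Metric_space Y dY by (fact Y)
  have "\<exists>\<delta>>0. \<forall>x\<in>X. \<forall>x'\<in>X. dX x' x < \<delta> \<longrightarrow> dY (f x') (f x) < \<epsilon>" if "\<epsilon> > 0" for \<epsilon>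
  proof -
    have "\<epsilon>/3 > 0" using \<open>\<epsilon> > 0\<close> by simp
    then obtain \<eta> where "\<eta> > 0" and \<eta>: "\<forall>x\<in>X. \<forall>y\<in>Y. F x y \<le> \<eta> \<longrightarrow> dY (f x) y \<le> \<epsilon>/3"
      using rep unfolding fr_equiv_iff G_map_def by blast
    obtain \<delta> where "\<delta> > 0" and \<delta>: "\<And>x x' y y'. x \<in> X \<Longrightarrow> x' \<in> X \<Longrightarrow> y \<in> Y \<Longrightarrow> y' \<in> Y \<Longrightarrow>
        F x y \<le> \<delta> \<Longrightarrow> dX x x' \<le> \<delta> \<Longrightarrow> dY y y' \<le> \<delta> \<Longrightarrow> F x' y' \<le> \<eta>"
      using functional_rel_compatible[OF fr \<open>\<eta> > 0\<close>] by blast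
    have "dY (f x') (f x) < \<epsilon>" if x: "x \<in> X" "x' \<in> X" and "dX x' x < \<delta>" for x x'
    proof -
      have "min \<eta> \<delta> > 0" using \<open>\<eta> > 0\<close> \<open>\<delta> > 0\<close> by simp
      then obtain y where "y \<in> Y" "F x' y < min \<eta> \<delta>"
        using functional_rel_total[OF fr \<open>x' \<in> X\<close>] by blast
      then have y: "y \<in> Y" "F x' y \<le> \<eta>" "F x' y \<le> \<delta>" by simp_all
      have "F x y \<le> \<eta>"
        using \<delta>[of x' x y y] x y \<open>dX x' x < \<delta>\<close> \<open>\<delta> > 0\<close> Y.mdist_zero by simp
      then have "dY (f x) y \<le> \<epsilon>/3" and "dY (f x') y \<le> \<epsilon>/3"
        using \<eta> x y by auto
      moreover have "dY (f x') (f x) \<le> dY (f x') y + dY (f x) y"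
        using Y.triangle' f x y(1) by blast
      ultimately show ?thesis
        using \<open>\<epsilon> > 0\<close> by linarith
    qed
    with \<open>\<delta> > 0\<close> show ?thesis by blast
  qed
  with f show ?thesis
    by (simp add: uniformly_continuous_map_def X.mspace_metric Y.mspace_metric
        X.mdist_metric Y.mdist_metric)
qed

lemma G_map_faithful:
  assumes "Metric_space Y dY" and "f \<in> X \<rightarrow> Y" "g \<in> X \<rightarrow> Y"
    and "fr_equiv X Y (G_map dY f) (G_map dY g)" and "x \<in> X"
  shows "f x = g x"
proof -
  interpret Y: Metric_space Y dY by fact
  have fx: "f x \<in> Y" and gx: "g x \<in> Y" using assms by auto
  have "dY (g x) (f x) \<le> \<epsilon>" if "\<epsilon> > 0" for \<epsilon>
  proof -
    obtain \<delta> where "\<delta> > 0" "\<forall>x\<in>X. \<forall>y\<in>Y. dY (f x) y \<le> \<delta> \<longrightarrow> dY (g x) y \<le> \<epsilon>"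
      using assms(4) \<open>\<epsilon> > 0\<close> unfolding fr_equiv_iff G_map_def by blast
    then show ?thesis using \<open>x \<in> X\<close> fx by simp
  qed
  then show ?thesis
    using Y.eq_if_mdist_le_epsilon[OF gx fx] by simp
qed

lemma G_map_representative_unique:
  assumes "Metric_space Y dY" and total: "\<And>\<epsilon>. \<epsilon> > 0 \<Longrightarrow> \<exists>y\<in>Y. F x y < \<epsilon>"
    and "f x \<in> Y" "g x \<in> Y" "x \<in> X"
    and "fr_equiv X Y F (G_map dY f)" "fr_equiv X Y F (G_map dY g)"
  shows "f x = g x"
proof -
  interpret Y: Metric_space Y dY by fact
  have "dY (f x) (g x) \<le> \<epsilon>" if "\<epsilon> > 0" for \<epsilon>
  proof -
    have "\<epsilon>/2 > 0" using \<open>\<epsilon> > 0\<close> by simp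
    then obtain \<delta>f where "\<delta>f > 0"
      and \<delta>f: "\<forall>x\<in>X. \<forall>y\<in>Y. F x y \<le> \<delta>f \<longrightarrow> dY (f x) y \<le> \<epsilon>/2"
      using assms(6) unfolding fr_equiv_iff G_map_def by blast
    obtain \<delta>g where "\<delta>g > 0"
      and \<delta>g: "\<forall>x\<in>X. \<forall>y\<in>Y. F x y \<le> \<delta>g \<longrightarrow> dY (g x) y \<le> \<epsilon>/2"
      using assms(7) \<open>\<epsilon>/2 > 0\<close> unfolding fr_equiv_iff G_map_def by blast
    from \<open>\<delta>f > 0\<close> \<open>\<delta>g > 0\<close> have "min \<delta>f \<delta>g > 0" by simp
    then obtain y where "y \<in> Y" "F x y < min \<delta>f \<delta>g"
      using total by blast
    then have "dY (f x) y \<le> \<epsilon>/2" "dY (g x) y \<le> \<epsilon>/2"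
      using \<delta>f \<delta>g \<open>x \<in> X\<close> by auto
    moreover have "dY (f x) (g x) \<le> dY (f x) y + dY (g x) y"
      using Y.triangle' assms(3,4) \<open>y \<in> Y\<close> by blast
    ultimately show ?thesis by linarith
  qed
  then show ?thesis using Y.eq_if_mdist_le_epsilon assms(3,4) by blast
qed

theorem mainTheorem9:
  fixes X :: "'a set" and dX :: "'a \<Rightarrow> 'a \<Rightarrow> real"
    and Y :: "'b set" and dY :: "'b \<Rightarrow> 'b \<Rightarrow> real"
    and F :: "'a \<Rightarrow> 'b \<Rightarrow> real"
  assumes "cMet1 X dX" and "cMet1 Y dY"
    and "functional_rel X dX Y dY F"
  shows "(\<exists>f. uniformly_continuous_map (metric (X, dX)) (metric (Y, dY)) f \<and>
              fr_equiv X Y F (G_map dY f))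
       \<and> (\<forall>f g. uniformly_continuous_map (metric (X, dX)) (metric (Y, dY)) f \<and>
                uniformly_continuous_map (metric (X, dX)) (metric (Y, dY)) g \<and>
                fr_equiv X Y (G_map dY f) (G_map dY g) \<longrightarrow> (\<forall>x\<in>X. f x = g x))
       \<and> (\<forall>f g. uniformly_continuous_map (metric (X, dX)) (metric (Y, dY)) f \<and>
                uniformly_continuous_map (metric (X, dX)) (metric (Y, dY)) g \<and>
                fr_equiv X Y F (G_map dY f) \<and> fr_equiv X Y F (G_map dY g)
                \<longrightarrow> (\<forall>x\<in>X. f x = g x))"
proof -
  have X: "Metric_space X dX" and Y: "Metric_space Y dY" "Metric_space.mcomplete Y dY"
    using assms(1,2) by (simp_all add: cMet1_def)
  have maps_into: "f \<in> X \<rightarrow> Y" if "uniformly_continuous_map (metric (X, dX)) (metric (Y, dY)) f" for f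
    using uniformly_continuous_map_funspace[OF that]
    by (simp add: Metric_space.mspace_metric[OF X] Metric_space.mspace_metric[OF Y(1)])
  obtain f where "f \<in> X \<rightarrow> Y" "fr_equiv X Y F (G_map dY f)"
    using functional_rel_represented_by_map[OF Y assms(3)] .
  then have full: "\<exists>f. uniformly_continuous_map (metric (X, dX)) (metric (Y, dY)) f \<and>
      fr_equiv X Y F (G_map dY f)"
    using uniformly_continuous_map_if_represents[OF X Y(1) assms(3)] by blast
  have faithful: "f x = g x"
    if "uniformly_continuous_map (metric (X, dX)) (metric (Y, dY)) f"
      and "uniformly_continuous_map (metric (X, dX)) (metric (Y, dY)) g"
      and "fr_equiv X Y (G_map dY f) (G_map dY g)" and "x \<in> X" for f g x
    using G_map_faithful[OF Y(1) maps_into maps_into] that by blast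
  have unique: "f x = g x"
    if "uniformly_continuous_map (metric (X, dX)) (metric (Y, dY)) f"
      and "uniformly_continuous_map (metric (X, dX)) (metric (Y, dY)) g"
      and "fr_equiv X Y F (G_map dY f)" "fr_equiv X Y F (G_map dY g)" and "x \<in> X" for f g x
    using G_map_representative_unique[where F = F, OF Y(1) functional_rel_total[OF assms(3)]]
      maps_into that by (meson PiE)
  show ?thesis
    using full faithful unique by blast
qed

end
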